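(* There exists a family $(C_k)_{k\ge1}$ of real non-singular $k$-sections $C_k\subset\mathbb{C}^2$ such that, for every $k\ge1$, the closure of $\mathbb{R}C_k$ in $\mathbb{R}\mathcal O_{\mathbb{C}P^1}(4)$ is connected, and the number $r_k$ of real vertical lines $\{u=\mathrm{const}\}$ tangent to $C_k$ satisfies $r_k=4k^2+O(k)$.
   Context: A non-singular $k$-section in $\mathbb{C}^2$ is a curve defined by $P(u,w)=\sum a_{i,j}u^iw^j$ whose Newton polygon (convex hull of $\{(i,j):a_{i,j}\neq0\}$) is the triangle with vertices $(0,0),(4k,0),(0,k)$, which is non-singular in $\mathbb{C}^2$, and such that $\sum_{i+4j=4k}a_{i,j}u^iw^j$ has no multiple factors; it is real if $P$ is real. $\mathbb{C}^2$ is viewed as the chart $v=1$ of the total space $\mathcal O_{\mathbb{C}P^1}(4)=\{[u:v:w]\in\mathbb{C}P^2(1,1,4):(u,v)\neq(0,0)\}$, with real part $\mathbb{R}\mathcal O_{\mathbb{C}P^1}(4)$. *)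

theory Defs
  imports "HOL-Analysis.Analysis" "HOL-Computational_Algebra.Polynomial" "HOL-Computational_Algebra.Squarefree"
begin

text \<open>Bivariate polynomials P(u,w) are represented as elements of 'a poly poly:
  the outer variable is w, the inner one is u, so that the coefficient a(i,j) of
  u^i w^j is coeff (coeff P j) i.\<close>

definition bcoeff :: "'a::zero poly poly \<Rightarrow> nat \<Rightarrow> nat \<Rightarrow> 'a" where
  "bcoeff P i j = coeff (coeff P j) i"

definition beval :: "'a::comm_semiring_0 poly poly \<Rightarrow> 'a \<Rightarrow> 'a \<Rightarrow> 'a" where
  "beval P u w = poly (map_poly (\<lambda>c. poly c u) P) w"

definition bderiv_u :: "'a::idom poly poly \<Rightarrow> 'a poly poly" where
  "bderiv_u P = map_poly pderiv P"

definition bderiv_w :: "'a::idom poly poly \<Rightarrow> 'a poly poly" where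
  "bderiv_w P = pderiv P"

definition complexify :: "real poly poly \<Rightarrow> complex poly poly" where
  "complexify P = map_poly (map_poly complex_of_real) P"

definition newton_polygon :: "'a::zero poly poly \<Rightarrow> (real \<times> real) set" where
  "newton_polygon P = convex hull {(real i, real j) | i j. bcoeff P i j \<noteq> 0}"

definition principal_part :: "nat \<Rightarrow> 'a::zero poly poly \<Rightarrow> 'a poly poly" where
  "principal_part k P =
     Poly (map (\<lambda>j. monom (bcoeff P (4*k - 4*j) j) (4*k - 4*j)) [0..<k+1])"

definition nonsingular_C2 :: "complex poly poly \<Rightarrow> bool" where
  "nonsingular_C2 Q \<longleftrightarrow>
     (\<forall>u w. beval Q u w = 0 \<longrightarrow> beval (bderiv_u Q) u w \<noteq> 0 \<or> beval (bderiv_w Q) u w \<noteq> 0)"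

definition real_nonsingular_k_section :: "nat \<Rightarrow> real poly poly \<Rightarrow> bool" where
  "real_nonsingular_k_section k P \<longleftrightarrow>
     newton_polygon P = convex hull {(0,0), (real (4*k), 0), (0, real k)} \<and>
     nonsingular_C2 (complexify P) \<and>
     squarefree (principal_part k (complexify P))"

text \<open>Real part RC = C \<inter> R^2 in the chart v = 1\<close>
definition real_part :: "real poly poly \<Rightarrow> (real \<times> real) set" where
  "real_part P = {(u, w). beval P u w = 0}"

text \<open>Real part of O(4): triples (u,v,w) with (u,v) \<noteq> (0,0), modulo
  (u,v,w) ~ (l u, l v, l^4 w), l real nonzero.  The following map is invariant under
  this action and induces a homeomorphism of RO(4) onto the closed subset
  S^1 \<times> R of R^3; we use it to carry the topology of RO(4).\<close>
definition RO4_embed :: "real \<times> real \<times> real \<Rightarrow> real \<times> real \<times> real" where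
  "RO4_embed = (\<lambda>(u, v, w).
     ((u^2 - v^2) / (u^2 + v^2), 2 * u * v / (u^2 + v^2), w / (u^2 + v^2)^2))"

definition closure_real_part_RO4 :: "real poly poly \<Rightarrow> (real \<times> real \<times> real) set" where
  "closure_real_part_RO4 P = closure ((\<lambda>(u, w). RO4_embed (u, 1, w)) ` real_part P)"

definition num_real_vertical_tangents :: "real poly poly \<Rightarrow> nat" where
  "num_real_vertical_tangents P =
     card {c :: real. \<exists>w :: complex.
        beval (complexify P) (complex_of_real c) w = 0 \<and>
        beval (bderiv_w (complexify P)) (complex_of_real c) w = 0}"

end

theory Submission
  imports Defs
begin

text \<open>
  The curves are \<open>P\<^sub>k(u, w) = F\<^sub>k(w) - G\<^sub>k(u)\<close> with \<open>F\<^sub>k = T\<^sub>k + w/4\<close> and \<open>G\<^sub>k\<close> an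
  affine function of \<open>T\<^bsub>4k\<^esub>\<close>, where \<open>T\<^sub>n\<close> is the Chebyshev polynomial \<open>chebyshev n\<close>.
  The tilt \<open>w/4\<close> keeps the \<open>k - 1\<close> critical points of \<open>T\<^sub>k\<close> real and simple, each trapped
  between two consecutive zeros of \<open>T\<^sub>k\<close>, and makes the critical values \<open>v\<^sub>j\<close> of \<open>F\<^sub>k\<close>
  pairwise distinct with \<open>\<bar>v\<^sub>j\<bar> \<le> 5/4\<close>. As \<open>T\<^bsub>4k\<^esub>\<close> has only the critical values
  \<open>\<plusminus>1\<close>, \<open>G\<^sub>k\<close> can be scaled so that no \<open>v\<^sub>j\<close> is a critical value of \<open>G\<^sub>k\<close>, which is
  nonsingularity. A real vertical tangent \<open>u = c\<close> means \<open>G\<^sub>k(c) = v\<^sub>j\<close> for some \<open>j\<close>; each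
  of these equations has at most \<open>4k\<close> real solutions, and exactly \<open>4k\<close> for the \<open>k - 2\<close>
  values \<open>v\<^sub>j\<close> lying strictly between the critical values of \<open>G\<^sub>k\<close>, so that
  \<open>4k(k - 2) \<le> r\<^sub>k \<le> 4k(k - 1)\<close>.

  The real curve is \<open>T\<^bsub>4k\<^esub>(u) = s(w)\<close> with \<open>s\<close> affine in \<open>F\<^sub>k\<close>. Over \<open>{\<bar>s\<bar> \<le> 1}\<close>
  it is a chain of \<open>4k\<close> branches \<open>u = cos ((m\<pi> \<plusminus> arccos s) / 4k)\<close> glued where
  \<open>s = \<plusminus>1\<close>; over \<open>{s \<ge> 1}\<close> it has two tails \<open>u = \<plusminus>cosh (arcosh s / 4k)\<close>, attached to
  the chain at \<open>u = \<plusminus>1\<close>. Hence the real curve, and with it its closure in \<open>\<real>O(4)\<close>, is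
  connected as soon as these sublevel sets of \<open>F\<^sub>k\<close> are intervals, which the location of
  the critical values guarantees. For even \<open>k\<close>, where \<open>F\<^sub>k\<close> tends to \<open>+\<infinity>\<close> at both ends,
  the level \<open>s = 1\<close> is put just above the lowest local minimum of \<open>F\<^sub>k\<close>; this splits
  \<open>{\<bar>s\<bar> \<le> 1}\<close> into two intervals, each carrying a full chain.
\<close>

section \<open>Chebyshev polynomials\<close>

fun chebyshev :: "nat \<Rightarrow> real poly" where
  "chebyshev 0 = 1"
| "chebyshev (Suc 0) = [:0, 1:]"
| "chebyshev (Suc (Suc n)) = [:0, 2:] * chebyshev (Suc n) - chebyshev n"

lemma poly_chebyshev_cos: "poly (chebyshev n) (cos x) = cos (real n * x)"
proof (induction n rule: chebyshev.induct)
  case (3 n)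
  have "cos (real (Suc (Suc n)) * x) + cos (real n * x) = 2 * cos x * cos (real (Suc n) * x)"
    using cos_add[of "real (Suc n) * x" x] cos_diff[of "real (Suc n) * x" x]
    by (simp add: algebra_simps)
  then show ?case using 3 by (simp add: algebra_simps)
qed auto

lemma poly_chebyshev_cosh: "poly (chebyshev n) (cosh x) = cosh (real n * x)"
proof (induction n rule: chebyshev.induct)
  case (3 n)
  have "cosh (real (Suc (Suc n)) * x) + cosh (real n * x) = 2 * cosh x * cosh (real (Suc n) * x)"
    using cosh_add[of "real (Suc n) * x" x] cosh_diff[of "real (Suc n) * x" x]
    by (simp add: algebra_simps)
  then show ?case using 3 by (simp add: algebra_simps)
qed auto

lemma poly_chebyshev_arcosh: "1 \<le> x \<Longrightarrow> poly (chebyshev n) x = cosh (real n * arcosh x)"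
  using poly_chebyshev_cosh[of n "arcosh x"] by simp

lemma poly_chebyshev_minus: "poly (chebyshev n) (- x) = (-1) ^ n * poly (chebyshev n) x"
  by (induction n rule: chebyshev.induct) (auto simp: algebra_simps)

lemma poly_chebyshev_minus_even: "even n \<Longrightarrow> poly (chebyshev n) (- x) = poly (chebyshev n) x"
  by (simp add: poly_chebyshev_minus)

lemma degree_chebyshev: "degree (chebyshev n) = n"
proof (induction n rule: chebyshev.induct)
  case (3 n)
  have "degree ([:0, 2:] * chebyshev (Suc n)) = Suc (Suc n)"
    using 3(1) by (subst degree_mult_eq) auto
  then show ?case using 3 by (simp add: degree_add_eq_left[of "- chebyshev n", simplified])
qed auto

lemma abs_poly_chebyshev_le_1: "\<bar>x\<bar> \<le> 1 \<Longrightarrow> \<bar>poly (chebyshev n) x\<bar> \<le> 1"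
  using poly_chebyshev_cos[of n "arccos x"] by (simp add: cos_arccos_abs)

lemma poly_chebyshev_ge_self:
  assumes "1 \<le> x" "1 \<le> n"
  shows "x \<le> poly (chebyshev n) x"
proof -
  have "arcosh x \<le> real n * arcosh x"
    using assms mult_right_mono[of 1 "real n" "arcosh x"] by simp
  then have "cosh (arcosh x) \<le> cosh (real n * arcosh x)"
    using assms by (subst cosh_real_nonneg_le_iff) auto
  then show ?thesis
    using assms by (simp add: poly_chebyshev_arcosh)
qed

lemma poly_chebyshev_cosh_arcosh:
  "1 \<le> n \<Longrightarrow> 1 \<le> y \<Longrightarrow> poly (chebyshev n) (cosh (arcosh y / real n)) = y"
  by (simp add: poly_chebyshev_cosh)

lemma cosh_arcosh_poly_chebyshev:
  assumes "1 \<le> n" "1 \<le> u"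
  shows "cosh (arcosh (poly (chebyshev n) u) / real n) = u"
  using assms by (simp add: poly_chebyshev_arcosh arcosh_cosh_real)

definition chebyshev_node :: "nat \<Rightarrow> real \<Rightarrow> real" where
  "chebyshev_node n c = cos (c * pi / real n)"

lemma abs_chebyshev_node_le_1 [simp]: "\<bar>chebyshev_node n c\<bar> \<le> 1"
  by (simp add: chebyshev_node_def)

lemma poly_chebyshev_node: "1 \<le> n \<Longrightarrow> poly (chebyshev n) (chebyshev_node n c) = cos (c * pi)"
  by (simp add: chebyshev_node_def poly_chebyshev_cos)

lemma poly_chebyshev_node_half_zero:
  "1 \<le> n \<Longrightarrow> poly (chebyshev n) (chebyshev_node n (real j + 1/2)) = 0"
  by (simp add: poly_chebyshev_node distrib_right cos_add)

lemma chebyshev_node_less_iff: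
  assumes "0 \<le> c" "c \<le> real n" "0 \<le> d" "d \<le> real n"
  shows "chebyshev_node n d < chebyshev_node n c \<longleftrightarrow> c < d"
proof (cases "n = 0")
  case False
  have "c * pi \<le> real n * pi" "d * pi \<le> real n * pi"
    using assms by (auto intro: mult_right_mono)
  with False show ?thesis
    using assms unfolding chebyshev_node_def
    by (subst cos_mono_less_eq) (auto simp: divide_le_eq divide_less_cancel)
qed (use assms in simp)

lemma chebyshev_node_half_le:
  assumes "j < j'" "j' \<le> n"
  shows "chebyshev_node n (real j' - 1/2) \<le> chebyshev_node n (real j + 1/2)"
  using assms by (subst not_less[symmetric], subst chebyshev_node_less_iff) auto

text \<open>The \<open>n\<close> solutions of \<open>T\<^sub>n(u) = y\<close> for \<open>\<bar>y\<bar> \<le> 1\<close>, indexed so that the \<open>m\<close>-th one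
  lies in the \<open>m\<close>-th interval \<open>[cos ((m+1) \<pi> / n), cos (m \<pi> / n)]\<close> of monotonicity of \<open>T\<^sub>n\<close>.\<close>

definition chebyshev_preimage :: "nat \<Rightarrow> nat \<Rightarrow> real \<Rightarrow> real" where
  "chebyshev_preimage n m y = cos ((real m * pi + arccos ((-1) ^ m * y)) / real n)"

lemma poly_chebyshev_preimage:
  assumes "1 \<le> n" "\<bar>y\<bar> \<le> 1"
  shows "poly (chebyshev n) (chebyshev_preimage n m y) = y"
proof -
  have "\<bar>(-1) ^ m * y\<bar> \<le> 1"
    using assms(2) by (simp add: abs_mult)
  with assms(1) show ?thesis
    by (simp add: chebyshev_preimage_def poly_chebyshev_cos cos_add cos_arccos_abs mult.assoc)
qed

lemma chebyshev_preimage_exhaustive: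
  assumes "1 \<le> n" "\<bar>u\<bar> \<le> 1"
  shows "\<exists>m<n. u = chebyshev_preimage n m (poly (chebyshev n) u)"
proof -
  define \<theta> where "\<theta> = arccos u"
  have \<theta>: "0 \<le> \<theta>" "\<theta> \<le> pi" "cos \<theta> = u"
    using assms(2) by (auto simp: \<theta>_def arccos_lbound arccos_ubound cos_arccos_abs)
  define r where "r = real n * \<theta> / pi"
  have r: "0 \<le> r" "r \<le> real n"
    using \<theta> mult_right_mono[OF \<theta>(2), of "real n"] by (auto simp: r_def field_simps)
  define m where "m = (if real n \<le> r then n - 1 else nat \<lfloor>r\<rfloor>)"
  have "m < n \<and> real m \<le> r \<and> r \<le> real m + 1"
  proof (cases "real n \<le> r")
    case True
    then show ?thesis
      using r assms(1) by (auto simp: m_def of_nat_diff)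
  next
    case False
    then have "nat \<lfloor>r\<rfloor> < n"
      using r by linarith
    with False r show ?thesis
      by (auto simp: m_def)
  qed
  then have m: "m < n" "real m * pi \<le> real n * \<theta>" "real n * \<theta> \<le> real m * pi + pi"
    by (auto simp: r_def field_simps)
  define \<phi> where "\<phi> = real n * \<theta> - real m * pi"
  have "(-1) ^ m * poly (chebyshev n) u = cos \<phi>"
    unfolding \<phi>_def using \<theta>(3)[symmetric]
    by (simp add: poly_chebyshev_cos cos_diff mult.assoc[symmetric])
  moreover have "0 \<le> \<phi>" "\<phi> \<le> pi"
    using m by (simp_all add: \<phi>_def)
  ultimately have "arccos ((-1) ^ m * poly (chebyshev n) u) = \<phi>"
    by (simp add: arccos_cos)
  then have "chebyshev_preimage n m (poly (chebyshev n) u) = u"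
    using assms(1) \<theta>(3) by (simp add: chebyshev_preimage_def \<phi>_def)
  with m(1) show ?thesis
    by metis
qed

lemma chebyshev_preimage_less:
  assumes "\<bar>y\<bar> < 1" "m < m'" "m' < n"
  shows "chebyshev_preimage n m' y < chebyshev_preimage n m y"
proof -
  let ?a = "\<lambda>m. (real m * pi + arccos ((-1) ^ m * y)) / real n"
  have y: "\<bar>(-1) ^ i * y\<bar> < 1" for i :: nat
    using assms(1) by (simp add: abs_mult)
  have arccos: "0 < arccos ((-1) ^ i * y)" "arccos ((-1) ^ i * y) < pi" for i :: nat
    using arccos_lt_bounded[of "(-1) ^ i * y"] y[of i] by (auto simp: abs_less_iff)
  have n: "0 < real n"
    using assms by simp
  have upper: "?a i < (real i + 1) * pi / real n" for i
    using arccos[of i] n by (simp add: divide_strict_right_mono distrib_right)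
  have "?a m < (real m + 1) * pi / real n"
    by (rule upper)
  also have "\<dots> \<le> real m' * pi / real n"
    using assms n by (intro divide_right_mono mult_right_mono) auto
  also have "\<dots> < ?a m'"
    using arccos[of m'] n by (simp add: divide_strict_right_mono)
  finally have "?a m < ?a m'" .
  moreover have "(real m' + 1) * pi \<le> real n * pi"
    using assms(3) by (intro mult_right_mono) auto
  then have "(real m' + 1) * pi / real n \<le> pi"
    using n by (simp add: divide_le_eq mult.commute)
  then have "?a m' \<le> pi"
    using upper[of m'] by linarith
  moreover have "0 \<le> ?a m"
    using arccos[of m] n by simp
  ultimately show ?thesis
    unfolding chebyshev_preimage_def by (subst cos_mono_less_eq) auto
qed

lemma chebyshev_preimage_first_one: "chebyshev_preimage n 0 1 = 1"
  by (simp add: chebyshev_preimage_def)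

lemma chebyshev_preimage_last_one:
  assumes "even n" "1 \<le> n"
  shows "chebyshev_preimage n (n - 1) 1 = -1"
proof -
  have "(-1 :: real) ^ (n - 1) = -1"
    using assms by simp
  moreover have "real (n - 1) * pi + pi = real n * pi"
    using assms(2) by (simp add: of_nat_diff algebra_simps)
  ultimately show ?thesis
    using assms(2) by (simp add: chebyshev_preimage_def)
qed

lemma finite_chebyshev_level_and_card_le:
  assumes "1 \<le> n"
  shows "finite {u. poly (chebyshev n) u = y}" "card {u. poly (chebyshev n) u = y} \<le> n"
proof -
  let ?p = "chebyshev n + [:- y:]"
  have "degree ?p = n"
    using assms degree_add_eq_left[of "[:- y:]" "chebyshev n"] by (simp add: degree_chebyshev)
  then have "?p \<noteq> 0"
    using assms by auto
  then have "finite {u. poly ?p u = 0}" "card {u. poly ?p u = 0} \<le> n"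
    using poly_roots_finite[of ?p] card_poly_roots_bound[of ?p] \<open>degree ?p = n\<close> by auto
  then show "finite {u. poly (chebyshev n) u = y}" "card {u. poly (chebyshev n) u = y} \<le> n"
    by simp_all
qed

lemma card_chebyshev_level:
  assumes "1 \<le> n" "\<bar>y\<bar> < 1"
  shows "card {u. poly (chebyshev n) u = y} = n"
proof -
  have "inj_on (\<lambda>m. chebyshev_preimage n m y) {..<n}"
    using chebyshev_preimage_less[OF assms(2)]
    by (intro inj_onI) (metis linorder_cases less_irrefl lessThan_iff)
  then have "n = card ((\<lambda>m. chebyshev_preimage n m y) ` {..<n})"
    by (simp add: card_image)
  also have "\<dots> \<le> card {u. poly (chebyshev n) u = y}"
    using assms finite_chebyshev_level_and_card_le(1)[OF assms(1)]
    by (intro card_mono) (auto simp: poly_chebyshev_preimage)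
  finally show ?thesis
    using finite_chebyshev_level_and_card_le(2)[OF assms(1)] by (simp add: le_antisym)
qed

section \<open>Critical points of real polynomials\<close>

lemma poly_map_poly_of_real:
  "poly (map_poly of_real p) (of_real x :: 'a::{real_algebra_1,idom}) = of_real (poly p x)"
  by (induction p) (auto simp: map_poly_pCons)

lemma pderiv_map_poly_of_real:
  "pderiv (map_poly (of_real :: real \<Rightarrow> 'a::{real_algebra_1,idom}) p) = map_poly of_real (pderiv p)"
  by (rule poly_eqI) (simp add: coeff_pderiv coeff_map_poly)

lemma degree_map_poly_of_real [simp]:
  "degree (map_poly (of_real :: real \<Rightarrow> 'a::{real_algebra_1,idom}) p) = degree p"
  by (rule degree_map_poly) simp

lemma complex_roots_eq_real_roots:
  fixes p :: "real poly"
  assumes "p \<noteq> 0" "S \<subseteq> {x. poly p x = 0}" "card S = degree p"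
  shows "{z :: complex. poly (map_poly of_real p) z = 0} = of_real ` S"
proof -
  let ?R = "{z :: complex. poly (map_poly of_real p) z = 0}"
  have "map_poly of_real p \<noteq> (0 :: complex poly)"
    using assms(1) by (simp add: map_poly_eq_0_iff)
  then have R: "finite ?R" "card ?R \<le> degree p"
    using poly_roots_finite card_poly_roots_bound by fastforce+
  have "finite S"
    using assms(1,2) poly_roots_finite finite_subset by blast
  then have "card (of_real ` S :: complex set) = degree p"
    using assms(3) by (simp add: card_image inj_on_def)
  moreover have "of_real ` S \<subseteq> ?R"
    using assms(2) by (auto simp: poly_map_poly_of_real)
  ultimately show ?thesis
    using card_seteq[OF R(1)] R(2) by (metis order.refl)
qed

lemma exists_crit_above_ends:
  fixes p :: "real poly"
  assumes "x \<in> {a..b}" "poly p a < poly p x" "poly p b < poly p x"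
  shows "\<exists>z\<in>{a<..<b}. poly (pderiv p) z = 0 \<and> poly p x \<le> poly p z"
proof -
  obtain z where z: "z \<in> {a..b}" "\<And>y. y \<in> {a..b} \<Longrightarrow> poly p y \<le> poly p z"
  proof -
    have "continuous_on {a..b} (poly p)"
      by (intro continuous_intros)
    with assms(1) show ?thesis
      using continuous_attains_sup[OF compact_Icc, of a b "poly p"] that by fastforce
  qed
  have "poly p x \<le> poly p z"
    using z(2) assms(1) .
  then have "a < z" "z < b"
    using z(1) assms(2,3) by (auto simp: order.order_iff_strict)
  then have "poly (pderiv p) z = 0"
    using z(2) by (intro DERIV_local_max[OF poly_DERIV, of "min (z - a) (b - z)"])
      (auto simp: abs_if split: if_splits)
  with \<open>a < z\<close> \<open>z < b\<close> \<open>poly p x \<le> poly p z\<close> show ?thesis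
    by auto
qed

lemma is_interval_poly_sublevel:
  fixes p :: "real poly"
  assumes I: "is_interval I"
    and crit: "\<And>a b z. a \<in> I \<Longrightarrow> b \<in> I \<Longrightarrow> a < z \<Longrightarrow> z < b \<Longrightarrow> poly (pderiv p) z = 0 \<Longrightarrow>
      poly p z \<le> \<beta>"
  shows "is_interval {w \<in> I. poly p w \<le> \<beta>}"
  unfolding is_interval_1
proof (intro ballI allI impI)
  fix a b x
  assume a: "a \<in> {w \<in> I. poly p w \<le> \<beta>}" and b: "b \<in> {w \<in> I. poly p w \<le> \<beta>}"
    and x: "a \<le> x \<and> x \<le> b"
  have "x \<in> I"
    using I a b x unfolding is_interval_1 by blast
  show "x \<in> {w \<in> I. poly p w \<le> \<beta>}"
  proof (rule ccontr)
    assume "x \<notin> {w \<in> I. poly p w \<le> \<beta>}"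
    then have "\<beta> < poly p x"
      using \<open>x \<in> I\<close> by auto
    then have "poly p a < poly p x" "poly p b < poly p x"
      using a b by auto
    then obtain z where "z \<in> {a<..<b}" "poly (pderiv p) z = 0" "poly p x \<le> poly p z"
      using exists_crit_above_ends[of x a b p] x by auto
    then show False
      using crit[of a b z] a b \<open>\<beta> < poly p x\<close> by auto
  qed
qed

lemma is_interval_poly_superlevel:
  fixes p :: "real poly"
  assumes "is_interval I"
    and "\<And>a b z. a \<in> I \<Longrightarrow> b \<in> I \<Longrightarrow> a < z \<Longrightarrow> z < b \<Longrightarrow> poly (pderiv p) z = 0 \<Longrightarrow>
      \<alpha> \<le> poly p z"
  shows "is_interval {w \<in> I. \<alpha> \<le> poly p w}"
  using is_interval_poly_sublevel[of I "- p" "- \<alpha>"] assms by (simp add: pderiv_minus)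

lemma connected_poly_band:
  fixes p :: "real poly"
  assumes "is_interval I"
    and "\<And>a b z. a \<in> I \<Longrightarrow> b \<in> I \<Longrightarrow> a < z \<Longrightarrow> z < b \<Longrightarrow> poly (pderiv p) z = 0 \<Longrightarrow>
      \<alpha> \<le> poly p z \<and> poly p z \<le> \<beta>"
  shows "connected {w \<in> I. \<alpha> \<le> poly p w \<and> poly p w \<le> \<beta>}"
proof -
  have "is_interval ({w \<in> I. poly p w \<le> \<beta>} \<inter> {w \<in> I. \<alpha> \<le> poly p w})"
    using is_interval_poly_sublevel[of I p \<beta>] is_interval_poly_superlevel[of I p \<alpha>] assms
    unfolding is_interval_1 by blast
  moreover have "{w \<in> I. poly p w \<le> \<beta>} \<inter> {w \<in> I. \<alpha> \<le> poly p w} =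
      {w \<in> I. \<alpha> \<le> poly p w \<and> poly p w \<le> \<beta>}"
    by auto
  ultimately show ?thesis
    by (simp add: is_interval_connected_1)
qed

section \<open>Tilted Chebyshev polynomials\<close>

definition tilted_chebyshev :: "nat \<Rightarrow> real \<Rightarrow> real poly" where
  "tilted_chebyshev n t = chebyshev n + [:0, t:]"

lemma poly_tilted_chebyshev [simp]:
  "poly (tilted_chebyshev n t) x = poly (chebyshev n) x + t * x"
  by (simp add: tilted_chebyshev_def)

lemma degree_tilted_chebyshev:
  assumes "1 \<le> n" "0 \<le> t"
  shows "degree (tilted_chebyshev n t) = n"
proof (cases "n = 1")
  case True
  then have "tilted_chebyshev n t = [:0, 1 + t:]"
    by (simp add: tilted_chebyshev_def)
  with True assms show ?thesis
    by simp
next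
  case False
  with assms show ?thesis
    unfolding tilted_chebyshev_def by (simp add: degree_add_eq_left degree_chebyshev)
qed

text \<open>For small \<open>t\<close>, each interior extremum \<open>chebyshev_node n j\<close> of \<open>T\<^sub>n\<close> survives the
  tilt as a critical point of \<open>T\<^sub>n + t X\<close> between the neighbouring zeros of \<open>T\<^sub>n\<close>, with
  critical value still beyond \<open>\<plusminus>1 + t chebyshev_node n j\<close>.\<close>

definition tilted_crit_window :: "nat \<Rightarrow> real \<Rightarrow> nat \<Rightarrow> real \<Rightarrow> bool" where
  "tilted_crit_window n t j z \<longleftrightarrow>
     z \<in> {chebyshev_node n (real j + 1/2) <..< chebyshev_node n (real j - 1/2)} \<and>
     poly (pderiv (tilted_chebyshev n t)) z = 0 \<and>
     1 \<le> (-1) ^ j * (poly (tilted_chebyshev n t) z - t * chebyshev_node n j)"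

lemma tilted_crit_window_exists:
  assumes t: "0 \<le> t" "t < 1/2" and j: "1 \<le> j" "j < n"
  shows "\<exists>z. tilted_crit_window n t j z"
proof -
  define \<sigma> :: real where "\<sigma> = (-1) ^ j"
  have \<sigma>: "\<bar>\<sigma>\<bar> = 1" "\<sigma> * \<sigma> = 1"
    by (cases "even j"; simp add: \<sigma>_def)+
  let ?Q = "tilted_chebyshev n t"
  let ?lo = "chebyshev_node n (real j + 1/2)" and ?x = "chebyshev_node n j"
    and ?hi = "chebyshev_node n (real j - 1/2)"
  have n: "1 \<le> n" and jn: "real j + 1/2 \<le> real n"
    using j by linarith+
  have "?lo < ?x" "?x < ?hi"
    using j jn by (subst chebyshev_node_less_iff; simp)+
  have small: "\<bar>\<sigma> * (t * chebyshev_node n c)\<bar> \<le> t" for c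
    using t mult_left_mono[OF abs_chebyshev_node_le_1[of n c], of t] by (simp add: abs_mult \<sigma>)
  have "real j - 1/2 = real (j - 1) + 1/2"
    using j by (simp add: of_nat_diff)
  then have "poly (chebyshev n) ?lo = 0" "poly (chebyshev n) ?hi = 0"
    using n by (simp_all only: poly_chebyshev_node_half_zero)
  then have ends: "poly (smult \<sigma> ?Q) ?lo \<le> t" "poly (smult \<sigma> ?Q) ?hi \<le> t"
    using small[of "real j + 1/2"] small[of "real j - 1/2"] by (simp_all add: abs_le_iff)
  have "poly (chebyshev n) ?x = \<sigma>"
    using n by (simp add: poly_chebyshev_node \<sigma>_def)
  then have mid: "poly (smult \<sigma> ?Q) ?x = 1 + \<sigma> * (t * ?x)"
    using \<sigma>(2) by (simp add: distrib_left)
  have "t < poly (smult \<sigma> ?Q) ?x"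
    using mid small[of j] t by (simp add: abs_le_iff)
  then obtain z where z: "z \<in> {?lo<..<?hi}" "poly (pderiv (smult \<sigma> ?Q)) z = 0"
      "poly (smult \<sigma> ?Q) ?x \<le> poly (smult \<sigma> ?Q) z"
    using exists_crit_above_ends[of ?x ?lo ?hi "smult \<sigma> ?Q"] \<open>?lo < ?x\<close> \<open>?x < ?hi\<close> ends
    by force
  have "poly (pderiv ?Q) z = 0"
    using z(2) \<sigma> by (auto simp: pderiv_smult)
  moreover have "1 \<le> \<sigma> * (poly ?Q z - t * ?x)"
    using z(3) mid by (simp add: right_diff_distrib)
  ultimately show ?thesis
    using z(1) by (auto simp: tilted_crit_window_def \<sigma>_def)
qed

definition tilted_crit :: "nat \<Rightarrow> real \<Rightarrow> nat \<Rightarrow> real" where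
  "tilted_crit n t j = (SOME z. tilted_crit_window n t j z)"

lemma tilted_crit_window_tilted_crit:
  "0 \<le> t \<Longrightarrow> t < 1/2 \<Longrightarrow> 1 \<le> j \<Longrightarrow> j < n \<Longrightarrow> tilted_crit_window n t j (tilted_crit n t j)"
  unfolding tilted_crit_def by (rule someI_ex) (rule tilted_crit_window_exists)

lemma abs_tilted_crit_le_1:
  assumes "0 \<le> t" "t < 1/2" "1 \<le> j" "j < n"
  shows "\<bar>tilted_crit n t j\<bar> \<le> 1"
  using tilted_crit_window_tilted_crit[OF assms]
    abs_chebyshev_node_le_1[of n "real j + 1/2"] abs_chebyshev_node_le_1[of n "real j - 1/2"]
  unfolding tilted_crit_window_def by (auto simp: abs_le_iff)

lemma tilted_crit_less:
  assumes "0 \<le> t" "t < 1/2" "1 \<le> j" "j < j'" "j' < n"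
  shows "tilted_crit n t j' < tilted_crit n t j"
proof -
  have "chebyshev_node n (real j' - 1/2) \<le> chebyshev_node n (real j + 1/2)"
    using assms by (intro chebyshev_node_half_le) auto
  then show ?thesis
    using tilted_crit_window_tilted_crit[of t j n] tilted_crit_window_tilted_crit[of t j' n] assms
    by (auto simp: tilted_crit_window_def)
qed

lemma inj_on_tilted_crit:
  assumes "0 \<le> t" "t < 1/2"
  shows "inj_on (tilted_crit n t) {1..<n}"
proof (rule inj_onI)
  fix j j' assume "j \<in> {1..<n}" "j' \<in> {1..<n}" "tilted_crit n t j = tilted_crit n t j'"
  then show "j = j'"
    using tilted_crit_less[OF assms, of j j' n] tilted_crit_less[OF assms, of j' j n]
    by (cases j j' rule: linorder_cases) auto
qed

lemma complex_roots_pderiv_tilted_chebyshev: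
  assumes "1 \<le> n" "0 \<le> t" "t < 1/2"
  shows "{w :: complex. poly (pderiv (map_poly of_real (tilted_chebyshev n t))) w = 0} =
    of_real ` tilted_crit n t ` {1..<n}"
  unfolding pderiv_map_poly_of_real
proof (rule complex_roots_eq_real_roots)
  show "pderiv (tilted_chebyshev n t) \<noteq> 0"
    using assms by (simp add: pderiv_eq_0_iff degree_tilted_chebyshev)
  show "tilted_crit n t ` {1..<n} \<subseteq> {x. poly (pderiv (tilted_chebyshev n t)) x = 0}"
    using tilted_crit_window_tilted_crit[of t _ n] assms by (auto simp: tilted_crit_window_def)
  show "card (tilted_crit n t ` {1..<n}) = degree (pderiv (tilted_chebyshev n t))"
    using assms card_image[OF inj_on_tilted_crit[OF assms(2,3)]]
    by (simp add: degree_pderiv degree_tilted_chebyshev)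
qed

lemma chebyshev_crit_values:
  assumes "1 \<le> n" "poly (pderiv (map_poly of_real (chebyshev n))) u = (0 :: complex)"
  shows "\<exists>y. u = of_real y \<and> \<bar>poly (chebyshev n) y\<bar> = 1"
proof -
  have "tilted_chebyshev n 0 = chebyshev n"
    by (simp add: tilted_chebyshev_def)
  then have "u \<in> of_real ` tilted_crit n 0 ` {1..<n}"
    using complex_roots_pderiv_tilted_chebyshev[of n 0] assms by auto
  then obtain j where j: "j \<in> {1..<n}" "u = of_real (tilted_crit n 0 j)"
    by blast
  then have "1 \<le> (-1) ^ j * poly (chebyshev n) (tilted_crit n 0 j)"
    using tilted_crit_window_tilted_crit[of 0 j n] by (simp add: tilted_crit_window_def)
  moreover have "\<bar>poly (chebyshev n) (tilted_crit n 0 j)\<bar> \<le> 1"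
    using j abs_tilted_crit_le_1[of 0 j n] by (simp add: abs_poly_chebyshev_le_1)
  ultimately show ?thesis
    using j by (cases "even j") auto
qed

section \<open>Connectedness of the real curves \<open>T\<^sub>n(u) = s(w)\<close>\<close>

lemma connected_UN_lessThan_chain:
  assumes "\<And>m. m < N \<Longrightarrow> connected (A m)" "\<And>m. Suc m < N \<Longrightarrow> A m \<inter> A (Suc m) \<noteq> {}"
  shows "connected (\<Union>m<N. A m)"
  using assms
proof (induction N)
  case (Suc N)
  show ?case
  proof (cases N)
    case (Suc N')
    then have "A N' \<inter> A N \<noteq> {}" "A N' \<subseteq> (\<Union>m<N. A m)"
      using Suc.prems(2)[of N'] by auto
    then have "(\<Union>m<N. A m) \<inter> A N \<noteq> {}"
      by blast
    moreover have "connected (\<Union>m<N. A m)" "connected (A N)"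
      using Suc.IH Suc.prems by auto
    moreover have "(\<Union>m<Suc N. A m) = (\<Union>m<N. A m) \<union> A N"
      by (auto simp: lessThan_Suc)
    ultimately show ?thesis
      by (simp add: connected_Un)
  qed (use Suc in \<open>simp add: lessThan_Suc\<close>)
qed simp

definition chebyshev_branch :: "nat \<Rightarrow> nat \<Rightarrow> (real \<Rightarrow> real) \<Rightarrow> real set \<Rightarrow> (real \<times> real) set" where
  "chebyshev_branch n m s S = (\<lambda>w. (chebyshev_preimage n m (s w), w)) ` S"

definition chebyshev_tail :: "nat \<Rightarrow> real \<Rightarrow> (real \<Rightarrow> real) \<Rightarrow> real set \<Rightarrow> (real \<times> real) set" where
  "chebyshev_tail n \<sigma> s S = (\<lambda>w. (\<sigma> * cosh (arcosh (s w) / real n), w)) ` S"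

lemma chebyshev_graph_eq:
  assumes "even n" "1 \<le> n"
  shows "{(u, w). poly (chebyshev n) u = s w} =
    (\<Union>m<n. chebyshev_branch n m s {w. \<bar>s w\<bar> \<le> 1}) \<union>
    chebyshev_tail n 1 s {w. 1 \<le> s w} \<union> chebyshev_tail n (-1) s {w. 1 \<le> s w}"
    (is "?G = ?B \<union> ?Tpos \<union> ?Tneg")
proof (intro equalityI subsetI)
  fix x
  assume "x \<in> ?G"
  then obtain u w where x: "x = (u, w)" and uw: "poly (chebyshev n) u = s w"
    by blast
  consider "\<bar>u\<bar> \<le> 1" | "1 < u" | "u < -1"
    by linarith
  then have "(u, w) \<in> ?B \<union> ?Tpos \<union> ?Tneg"
  proof cases
    case 1
    then obtain m where "m < n" "u = chebyshev_preimage n m (s w)"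
      using chebyshev_preimage_exhaustive[OF assms(2) 1] unfolding uw by blast
    moreover have "\<bar>s w\<bar> \<le> 1"
      using abs_poly_chebyshev_le_1[OF 1, of n] uw by simp
    ultimately have "(u, w) \<in> chebyshev_branch n m s {w. \<bar>s w\<bar> \<le> 1}"
      unfolding chebyshev_branch_def by (intro image_eqI[of _ _ w]) simp_all
    with \<open>m < n\<close> show ?thesis
      by blast
  next
    case 2
    then have "1 \<le> s w" "u = cosh (arcosh (s w) / real n)"
      using uw poly_chebyshev_ge_self[of u n] cosh_arcosh_poly_chebyshev[of n u] assms(2) by auto
    then have "(u, w) \<in> ?Tpos"
      unfolding chebyshev_tail_def by (intro image_eqI[of _ _ w]) simp_all
    then show ?thesis
      by blast
  next
    case 3
    then have "1 \<le> s w" "u = - cosh (arcosh (s w) / real n)"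
      using uw poly_chebyshev_ge_self[of "- u" n] cosh_arcosh_poly_chebyshev[of n "- u"] assms(2)
      by (auto simp: poly_chebyshev_minus_even assms(1))
    then have "(u, w) \<in> ?Tneg"
      unfolding chebyshev_tail_def by (intro image_eqI[of _ _ w]) simp_all
    then show ?thesis
      by blast
  qed
  with x show "x \<in> ?B \<union> ?Tpos \<union> ?Tneg"
    by simp
next
  fix x
  assume "x \<in> ?B \<union> ?Tpos \<union> ?Tneg"
  then consider m where "m < n" "x \<in> chebyshev_branch n m s {w. \<bar>s w\<bar> \<le> 1}"
    | "x \<in> ?Tpos" | "x \<in> ?Tneg"
    by blast
  then show "x \<in> ?G"
  proof cases
    case 1
    then show ?thesis
      using assms(2) by (auto simp: chebyshev_branch_def poly_chebyshev_preimage)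
  next
    case 2
    then show ?thesis
      using assms(2) by (auto simp: chebyshev_tail_def poly_chebyshev_cosh_arcosh)
  next
    case 3
    then show ?thesis
      using assms
      by (auto simp: chebyshev_tail_def poly_chebyshev_cosh_arcosh poly_chebyshev_minus_even)
  qed
qed

lemma connected_chebyshev_branch:
  assumes "1 \<le> n" "continuous_on S s" "connected S" "\<And>w. w \<in> S \<Longrightarrow> \<bar>s w\<bar> \<le> 1"
  shows "connected (chebyshev_branch n m s S)"
  unfolding chebyshev_branch_def chebyshev_preimage_def
proof (rule connected_continuous_image[OF _ assms(3)])
  have "\<bar>(-1) ^ m * s w\<bar> \<le> 1" if "w \<in> S" for w
    using assms(4)[OF that] by (simp add: abs_mult)
  then show "continuous_on S (\<lambda>w. (cos ((real m * pi + arccos ((-1) ^ m * s w)) / real n), w))"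
    using assms(1) by (intro continuous_intros assms(2)) (auto simp: abs_le_iff)
qed

lemma connected_chebyshev_tail:
  assumes "1 \<le> n" "continuous_on S s" "connected S" "\<And>w. w \<in> S \<Longrightarrow> 1 \<le> s w"
  shows "connected (chebyshev_tail n \<sigma> s S)"
  unfolding chebyshev_tail_def
  using assms by (intro connected_continuous_image[OF _ assms(3)] continuous_intros) auto

lemma connected_chebyshev_branches:
  assumes "1 \<le> n" "continuous_on S s" "connected S" "\<And>w. w \<in> S \<Longrightarrow> \<bar>s w\<bar> \<le> 1"
    and "a \<in> S" "s a = 1" "b \<in> S" "s b = -1"
  shows "connected (\<Union>m<n. chebyshev_branch n m s S)"
proof (rule connected_UN_lessThan_chain)
  show "connected (chebyshev_branch n m s S)" for m
    using assms(1-4) by (rule connected_chebyshev_branch)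
  fix m
  obtain w where w: "w \<in> S" "s w = (-1) ^ Suc m"
    using assms(5-8) by (cases "even m") auto
  text \<open>Branches \<open>m\<close> and \<open>m + 1\<close> share the point \<open>cos ((m + 1) \<pi> / n)\<close> over \<open>w\<close>.\<close>
  have "chebyshev_preimage n m (s w) = chebyshev_preimage n (Suc m) (s w)"
    using w(2) by (simp add: chebyshev_preimage_def distrib_right add.commute)
  then show "chebyshev_branch n m s S \<inter> chebyshev_branch n (Suc m) s S \<noteq> {}"
    using w(1) unfolding chebyshev_branch_def by blast
qed

lemma connected_chebyshev_graph:
  fixes s :: "real \<Rightarrow> real"
  assumes n: "even n" "1 \<le> n" and s: "continuous_on UNIV s"
    and LR: "{w. \<bar>s w\<bar> \<le> 1} = L \<union> R" "connected L" "connected R"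
    and S: "connected {w. 1 \<le> s w}"
    and L: "p \<in> L" "s p = 1" "p' \<in> L" "s p' = -1"
    and R: "q \<in> R" "s q = 1" "q' \<in> R" "s q' = -1"
  shows "connected {(u, w). poly (chebyshev n) u = s w}"
proof -
  let ?S = "{w. 1 \<le> s w}"
  let ?BL = "\<Union>m<n. chebyshev_branch n m s L" and ?BR = "\<Union>m<n. chebyshev_branch n m s R"
  let ?Tpos = "chebyshev_tail n 1 s ?S" and ?Tneg = "chebyshev_tail n (-1) s ?S"
  have "\<bar>s w\<bar> \<le> 1" if "w \<in> L \<union> R" for w
    using that LR(1) by blast
  then have "connected ?BL" "connected ?BR"
    using connected_chebyshev_branches[OF n(2) continuous_on_subset[OF s] LR(2) _ L]
      connected_chebyshev_branches[OF n(2) continuous_on_subset[OF s] LR(3) _ R]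
    by auto
  moreover have "connected ?Tpos" "connected ?Tneg"
    using S by (auto intro!: connected_chebyshev_tail[OF n(2)] continuous_on_subset[OF s])
  moreover have "(1, p) \<in> ?BL" "(-1, p) \<in> ?BL" "(1, q) \<in> ?BR"
  proof -
    have "(1, p) \<in> chebyshev_branch n 0 s L" "(1, q) \<in> chebyshev_branch n 0 s R"
      unfolding chebyshev_branch_def
      by (intro image_eqI[of _ _ p] image_eqI[of _ _ q];
          simp add: L R chebyshev_preimage_first_one)+
    moreover have "(-1, p) \<in> chebyshev_branch n (n - 1) s L"
      unfolding chebyshev_branch_def
      by (rule image_eqI[of _ _ p]) (simp_all only: L(1,2) chebyshev_preimage_last_one[OF n])
    moreover have "0 < n" "n - 1 < n"
      using n(2) by simp_all
    ultimately show "(1, p) \<in> ?BL" "(-1, p) \<in> ?BL" "(1, q) \<in> ?BR"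
      by blast+
  qed
  moreover have "(1, p) \<in> ?Tpos" "(1, q) \<in> ?Tpos" "(-1, p) \<in> ?Tneg"
    using L(2) R(2) unfolding chebyshev_tail_def by (force intro!: image_eqI)+
  ultimately have "connected (((?BL \<union> ?Tpos) \<union> ?BR) \<union> ?Tneg)"
    by (intro connected_Un) blast+
  also have "((?BL \<union> ?Tpos) \<union> ?BR) \<union> ?Tneg = {(u, w). poly (chebyshev n) u = s w}"
    unfolding chebyshev_graph_eq[OF n] LR(1) chebyshev_branch_def by blast
  finally show ?thesis .
qed

section \<open>Curves with separated variables\<close>

definition separated_poly :: "'a::comm_ring_1 poly \<Rightarrow> 'a poly \<Rightarrow> 'a poly poly" where
  "separated_poly f g = map_poly (\<lambda>c. [:c:]) f - [:g:]"

lemma coeff_separated_poly: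
  "coeff (separated_poly f g) j = [:coeff f j:] - (if j = 0 then g else 0)"
  by (simp add: separated_poly_def coeff_map_poly coeff_pCons split: nat.split)

lemma bcoeff_separated_poly:
  "bcoeff (separated_poly f g) i j =
     (if i = 0 then coeff f j else 0) - (if j = 0 then coeff g i else 0)"
  by (simp add: bcoeff_def coeff_separated_poly coeff_pCons split: nat.split)

lemma beval_separated_poly: "beval (separated_poly f g) u w = poly f w - poly g u"
proof -
  have "map_poly (\<lambda>c. poly c u) (separated_poly f g) = f - [:poly g u:]"
    by (rule poly_eqI) (simp add: coeff_map_poly coeff_separated_poly coeff_pCons split: nat.split)
  then show ?thesis
    by (simp add: beval_def)
qed

lemma bderiv_w_separated_poly:
  "bderiv_w (separated_poly f (g :: 'a::idom poly)) = separated_poly (pderiv f) 0"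
  unfolding bderiv_w_def
  by (rule poly_eqI) (simp add: coeff_pderiv coeff_separated_poly of_nat_poly)

lemma bderiv_u_separated_poly:
  "bderiv_u (separated_poly (f :: 'a::idom poly) g) = separated_poly 0 (pderiv g)"
  unfolding bderiv_u_def
  by (rule poly_eqI) (simp add: coeff_map_poly coeff_separated_poly pderiv_diff pderiv_pCons)

lemma complexify_separated_poly:
  "complexify (separated_poly f g) = separated_poly (map_poly of_real f) (map_poly of_real g)"
  unfolding complexify_def
  by (rule poly_eqI)
    (simp add: coeff_map_poly coeff_separated_poly poly_eq_iff coeff_pCons split: nat.split)

lemma real_part_separated_poly:
  "real_part (separated_poly f g) = {(u, w). poly f w = poly g u}"
  by (simp add: real_part_def beval_separated_poly)

lemma nonsingular_C2_separated_poly_iff: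
  "nonsingular_C2 (separated_poly f g) \<longleftrightarrow>
     (\<forall>u w. poly (pderiv f) w = 0 \<longrightarrow> poly (pderiv g) u = 0 \<longrightarrow> poly f w \<noteq> poly g u)"
  by (auto simp: nonsingular_C2_def bderiv_u_separated_poly bderiv_w_separated_poly
      beval_separated_poly)

lemma num_real_vertical_tangents_separated_poly:
  "num_real_vertical_tangents (separated_poly f g) =
     card {c. \<exists>w. poly (pderiv (map_poly of_real f)) w = 0 \<and>
                  poly (map_poly of_real f) w = complex_of_real (poly g c)}"
  unfolding num_real_vertical_tangents_def complexify_separated_poly bderiv_w_separated_poly
    beval_separated_poly
  by (simp add: poly_map_poly_of_real conj_commute)

lemma principal_part_separated_poly:
  assumes "degree f = k" "degree g = 4 * k" "1 \<le> k"
  shows "principal_part k (separated_poly f g) =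
    monom [:lead_coeff f:] k - [:monom (lead_coeff g) (4 * k):]"
proof (rule poly_eqI)
  fix m
  show "coeff (principal_part k (separated_poly f g)) m =
    coeff (monom [:lead_coeff f:] k - [:monom (lead_coeff g) (4 * k):]) m"
  proof (cases "m \<le> k")
    case True
    then have "coeff (principal_part k (separated_poly f g)) m =
      monom (bcoeff (separated_poly f g) (4*k - 4*m) m) (4*k - 4*m)"
      by (simp add: principal_part_def nth_default_def del: upt_Suc)
    with True assms show ?thesis
      by (cases "m = 0"; cases "m = k")
        (auto simp: bcoeff_separated_poly monom_0 coeff_pCons minus_monom split: nat.split)
  next
    case False
    with assms show ?thesis
      by (simp add: principal_part_def nth_default_def coeff_pCons split: nat.split del: upt_Suc)
  qed
qed

lemma squarefree_monom_minus_const: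
  fixes a b :: "'a::field_char_0"
  assumes "a \<noteq> 0" "b \<noteq> 0" "1 \<le> k"
  shows "squarefree (monom [:a:] k - [:monom b m:])"
proof (rule squarefreeI)
  let ?Q = "monom [:a:] k - [:monom b m:]"
  fix x assume "x\<^sup>2 dvd ?Q"
  then have "x dvd ?Q" "x dvd pderiv ?Q"
    by (auto simp: power2_eq_square pderiv_mult elim!: dvdE)
  have pQ: "pderiv ?Q = monom [:of_nat k * a:] (k - 1)"
    by (simp add: pderiv_diff pderiv_monom pderiv_pCons of_nat_poly)
  text \<open>Euler's identity \<open>k Q - w Q' = -k b u\<^sup>m\<close> leaves only a constant for \<open>x\<close> to divide.\<close>
  have "smult [:of_nat k:] ?Q - [:0, 1:] * pderiv ?Q = [: - smult (of_nat k) (monom b m) :]"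
    unfolding pQ using assms(3)
    by (intro poly_eqI) (auto simp: coeff_pCons smult_monom split: nat.split)
  moreover have "x dvd smult [:of_nat k:] ?Q - [:0, 1:] * pderiv ?Q"
    using dvd_diff[OF dvd_smult[OF \<open>x dvd ?Q\<close>] dvd_mult[OF \<open>x dvd pderiv ?Q\<close>]] .
  ultimately have "x dvd [: - smult (of_nat k) (monom b m) :]"
    by simp
  then have "degree x = 0"
    using dvd_imp_degree_le[of x] assms by fastforce
  then have x: "x = [:coeff x 0:]"
    by (rule degree_0_id[symmetric])
  then have "coeff x 0 dvd [:of_nat k * a:]"
    using \<open>x dvd pderiv ?Q\<close> pQ by (metis const_poly_dvd_iff coeff_monom)
  moreover have "is_unit [:of_nat k * a:]"
    using assms by (simp add: is_unit_poly_iff dvd_field_iff)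
  ultimately show "x dvd 1"
    using x by (metis dvd_unit_imp_unit is_unit_poly_iff)
qed

lemma newton_polygon_separated_poly:
  fixes f g :: "real poly"
  assumes "degree f = k" "degree g = 4 * k" "1 \<le> k" "coeff f 0 \<noteq> coeff g 0"
  shows "newton_polygon (separated_poly f g) = convex hull {(0,0), (real (4*k), 0), (0, real k)}"
proof -
  let ?S = "{(real i, real j) | i j. bcoeff (separated_poly f g) i j \<noteq> 0}"
  let ?T = "convex hull {(0::real, 0::real), (real (4*k), 0), (0, real k)}"
  have ST: "?S \<subseteq> ?T"
  proof
    fix p assume "p \<in> ?S"
    then obtain i j where p: "p = (real i, real j)" and nz: "bcoeff (separated_poly f g) i j \<noteq> 0"
      by blast
    then have "(i = 0 \<and> j \<le> k) \<or> (j = 0 \<and> i \<le> 4 * k)"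
      using assms(1,2) by (auto simp: bcoeff_separated_poly split: if_splits dest: le_degree)
    then show "p \<in> ?T"
    proof
      assume "i = 0 \<and> j \<le> k"
      then show ?thesis
        using p assms(3) unfolding convex_hull_3
        by (intro CollectI exI[of _ "1 - real j / real k"] exI[of _ 0] exI[of _ "real j / real k"])
          auto
    next
      assume "j = 0 \<and> i \<le> 4 * k"
      then show ?thesis
        using p assms(3) unfolding convex_hull_3
        by (intro CollectI exI[of _ "1 - real i / real (4 * k)"] exI[of _ "real i / real (4 * k)"]
            exI[of _ 0]) auto
    qed
  qed
  have "f \<noteq> 0" "g \<noteq> 0"
    using assms(1-3) by auto
  then have "lead_coeff f \<noteq> 0" "lead_coeff g \<noteq> 0"
    by simp_all
  then have "coeff g (4 * k) \<noteq> 0" "coeff f k \<noteq> 0"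
    using assms(1,2) by simp_all
  then have "bcoeff (separated_poly f g) 0 0 \<noteq> 0" "bcoeff (separated_poly f g) (4 * k) 0 \<noteq> 0"
    "bcoeff (separated_poly f g) 0 k \<noteq> 0"
    using assms(3,4) by (simp_all add: bcoeff_separated_poly)
  then have "(real 0, real 0) \<in> ?S" "(real (4*k), real 0) \<in> ?S" "(real 0, real k) \<in> ?S"
    by blast+
  then have "?T \<subseteq> convex hull ?S"
    by (intro hull_mono) simp
  moreover have "convex hull ?S \<subseteq> ?T"
    using ST by (intro hull_minimal) simp_all
  ultimately show ?thesis
    unfolding newton_polygon_def by (rule antisym[rotated])
qed

lemma real_nonsingular_k_section_separated_poly:
  fixes f g :: "real poly"
  assumes "degree f = k" "degree g = 4 * k" "1 \<le> k" "coeff f 0 \<noteq> coeff g 0"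
    and "\<And>u w. poly (pderiv (map_poly of_real f)) w = 0 \<Longrightarrow>
           poly (pderiv (map_poly of_real g)) u = 0 \<Longrightarrow>
           poly (map_poly of_real f) w \<noteq> (poly (map_poly of_real g) u :: complex)"
  shows "real_nonsingular_k_section k (separated_poly f g)"
proof -
  have "f \<noteq> 0" "g \<noteq> 0"
    using assms(1-3) by auto
  then have "lead_coeff f \<noteq> 0" "lead_coeff g \<noteq> 0"
    by simp_all
  then have "squarefree (principal_part k (separated_poly (map_poly complex_of_real f)
      (map_poly complex_of_real g)))"
    using assms(1-3)
    by (subst principal_part_separated_poly)
      (auto simp: coeff_map_poly intro: squarefree_monom_minus_const)
  then show ?thesis
    using assms
    by (simp add: real_nonsingular_k_section_def newton_polygon_separated_poly
        complexify_separated_poly nonsingular_C2_separated_poly_iff)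
qed

lemma connected_closure_real_part_RO4:
  assumes "connected (real_part P)"
  shows "connected (closure_real_part_RO4 P)"
proof -
  have "(u::real)\<^sup>2 + 1 \<noteq> 0" for u
    by (metis power2_less_0 add_le_same_cancel1 not_one_le_zero linorder_not_le)
  then have "continuous_on UNIV (\<lambda>(u::real, w::real). RO4_embed (u, 1, w))"
    unfolding RO4_embed_def case_prod_unfold by (intro continuous_intros) auto
  then show ?thesis
    unfolding closure_real_part_RO4_def
    by (intro connected_imp_connected_closure connected_continuous_image[OF _ assms])
      (rule continuous_on_subset, auto)
qed

section \<open>The family of \<open>k\<close>-sections\<close>

definition curve_F :: "nat \<Rightarrow> real poly" where
  "curve_F k = tilted_chebyshev k (1/4)"

definition crit_F :: "nat \<Rightarrow> nat \<Rightarrow> real" where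
  "crit_F k j = tilted_crit k (1/4) j"

definition critval_F :: "nat \<Rightarrow> nat \<Rightarrow> real" where
  "critval_F k j = poly (curve_F k) (crit_F k j)"

lemma poly_curve_F [simp]: "poly (curve_F k) w = poly (chebyshev k) w + w / 4"
  by (simp add: curve_F_def)

lemma degree_curve_F: "1 \<le> k \<Longrightarrow> degree (curve_F k) = k"
  by (simp add: curve_F_def degree_tilted_chebyshev)

lemma complex_roots_pderiv_curve_F:
  "1 \<le> k \<Longrightarrow> {w :: complex. poly (pderiv (map_poly of_real (curve_F k))) w = 0} =
    of_real ` crit_F k ` {1..<k}"
  unfolding curve_F_def crit_F_def
  by (rule complex_roots_pderiv_tilted_chebyshev) auto

lemma pderiv_curve_F_eq_0_iff:
  assumes "1 \<le> k"
  shows "poly (pderiv (curve_F k)) z = 0 \<longleftrightarrow> z \<in> crit_F k ` {1..<k}"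
proof -
  have "poly (pderiv (curve_F k)) z = 0 \<longleftrightarrow>
      complex_of_real z \<in> {w. poly (pderiv (map_poly of_real (curve_F k))) w = 0}"
    by (simp add: pderiv_map_poly_of_real poly_map_poly_of_real)
  also have "\<dots> \<longleftrightarrow> z \<in> crit_F k ` {1..<k}"
    unfolding complex_roots_pderiv_curve_F[OF assms] by auto
  finally show ?thesis .
qed

lemma crit_F_window:
  assumes "j \<in> {1..<k}"
  shows "crit_F k j \<in> {chebyshev_node k (real j + 1/2) <..< chebyshev_node k (real j - 1/2)}"
    and "1 \<le> (-1) ^ j * (critval_F k j - chebyshev_node k j / 4)"
  using tilted_crit_window_tilted_crit[of "1/4" j k] assms
  by (auto simp: tilted_crit_window_def crit_F_def critval_F_def curve_F_def)

lemma abs_crit_F_le_1: "j \<in> {1..<k} \<Longrightarrow> \<bar>crit_F k j\<bar> \<le> 1"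
  using abs_tilted_crit_le_1[of "1/4" j k] by (simp add: crit_F_def)

lemma critval_F_bounds:
  assumes "j \<in> {1..<k}"
  shows "-1 + crit_F k j / 4 \<le> critval_F k j" "critval_F k j \<le> 1 + crit_F k j / 4"
    and "\<bar>critval_F k j\<bar> \<le> 5/4"
proof -
  have "\<bar>crit_F k j\<bar> \<le> 1"
    using assms by (rule abs_crit_F_le_1)
  moreover from this have "\<bar>poly (chebyshev k) (crit_F k j)\<bar> \<le> 1"
    by (rule abs_poly_chebyshev_le_1)
  ultimately show "-1 + crit_F k j / 4 \<le> critval_F k j" "critval_F k j \<le> 1 + crit_F k j / 4"
    and "\<bar>critval_F k j\<bar> \<le> 5/4"
    unfolding critval_F_def poly_curve_F abs_le_iff by linarith+
qed

lemma critval_F_sign: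
  assumes "j \<in> {1..<k}"
  shows "even j \<Longrightarrow> 3/4 \<le> critval_F k j" and "odd j \<Longrightarrow> critval_F k j \<le> -3/4"
  using crit_F_window(2)[OF assms] abs_chebyshev_node_le_1[of k j] by (auto simp: abs_le_iff)

text \<open>The critical value \<open>v\<^sub>j\<close> determines \<open>j\<close>: the point \<open>4 (v\<^sub>j - (-1)\<^sup>j)\<close> lies between the
  extremum \<open>chebyshev_node k j\<close> and the critical point, hence in the \<open>j\<close>-th window.\<close>

lemma critval_F_window:
  assumes "j \<in> {1..<k}"
  shows "4 * (critval_F k j - (-1) ^ j) \<in>
    {chebyshev_node k (real j + 1/2) <..< chebyshev_node k (real j - 1/2)}"
proof -
  have "chebyshev_node k (real j + 1/2) < chebyshev_node k j"
    "chebyshev_node k j < chebyshev_node k (real j - 1/2)"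
    using assms by (subst chebyshev_node_less_iff; simp)+
  then show ?thesis
    using crit_F_window[OF assms] critval_F_bounds[OF assms]
    by (cases "even j") auto
qed

lemma inj_on_critval_F: "inj_on (critval_F k) {1..<k}"
proof (rule inj_onI)
  fix j j' assume j: "j \<in> {1..<k}" "j' \<in> {1..<k}" and eq: "critval_F k j = critval_F k j'"
  then have "even j \<longleftrightarrow> even j'"
    using critval_F_sign[OF j(1)] critval_F_sign[OF j(2)] by force
  then have "4 * (critval_F k j - (-1) ^ j) = 4 * (critval_F k j' - (-1) ^ j')"
    using eq by (cases "even j") auto
  then have "\<not> j < j'" "\<not> j' < j"
    using critval_F_window[OF j(1)] critval_F_window[OF j(2)] j
      chebyshev_node_half_le[of j j' k] chebyshev_node_half_le[of j' j k] by auto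
  then show "j = j'"
    by simp
qed

lemma curve_F_ge_right: "1 \<le> k \<Longrightarrow> 1 \<le> w \<Longrightarrow> 5/4 * w \<le> poly (curve_F k) w"
  using poly_chebyshev_ge_self[of w k] by simp

lemma curve_F_on_unit: "\<bar>w\<bar> \<le> 1 \<Longrightarrow> \<bar>poly (curve_F k) w - w / 4\<bar> \<le> 1"
  using abs_poly_chebyshev_le_1[of w k] by simp

lemma curve_F_le_left_odd: "1 \<le> k \<Longrightarrow> odd k \<Longrightarrow> w \<le> -1 \<Longrightarrow> poly (curve_F k) w \<le> 5/4 * w"
  using poly_chebyshev_ge_self[of "- w" k] poly_chebyshev_minus[of k "- w"] by simp

lemma curve_F_ge_left_even: "1 \<le> k \<Longrightarrow> even k \<Longrightarrow> w \<le> -1 \<Longrightarrow> - 3/4 * w \<le> poly (curve_F k) w"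
  using poly_chebyshev_ge_self[of "- w" k] poly_chebyshev_minus_even[of k w] by simp

text \<open>For even \<open>k\<close>, \<open>low_level k = -1 + e/4\<close> with \<open>e\<close> the zero of \<open>T\<^sub>k\<close> just above the lowest
  local minimum \<open>crit_F k (k - 1)\<close> of \<open>curve_F k\<close>; this level separates the value of that
  minimum from all other critical values.\<close>

definition low_level :: "nat \<Rightarrow> real" where
  "low_level k = -1 + chebyshev_node k (real k - 3/2) / 4"

lemma low_level_bounds: "-5/4 \<le> low_level k" "low_level k \<le> -3/4"
  using abs_chebyshev_node_le_1[of k "real k - 3/2"] by (auto simp: low_level_def abs_le_iff)

lemma low_level_neq_minus_one:
  assumes "even k" "1 \<le> k"
  shows "low_level k \<noteq> -1"
proof
  assume "low_level k = -1"
  moreover have "2 \<le> k"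
    using assms by presburger
  ultimately have "chebyshev_node k (real k - 3/2) = chebyshev_node k (real k / 2)"
    by (simp add: low_level_def chebyshev_node_def)
  with \<open>2 \<le> k\<close> have "real k - 3/2 = real k / 2"
    using chebyshev_node_less_iff[of "real k - 3/2" k "real k / 2"]
      chebyshev_node_less_iff[of "real k / 2" k "real k - 3/2"]
    by (cases "real k - 3/2" "real k / 2" rule: linorder_cases) auto
  then have "k = 3"
    by linarith
  with assms show False
    by simp
qed

lemma lowest_crit_F_below_low_level:
  assumes "even k" "1 \<le> k"
  shows "crit_F k (k - 1) < chebyshev_node k (real k - 3/2)"
    and "critval_F k (k - 1) < low_level k"
proof -
  have "2 \<le> k"
    using assms by presburger
  then have k: "2 \<le> k" "k - 1 \<in> {1..<k}"
    by auto
  have "real (k - 1) - 1/2 = real k - 3/2"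
    using k by (simp add: of_nat_diff)
  then show "crit_F k (k - 1) < chebyshev_node k (real k - 3/2)"
    using crit_F_window(1)[OF k(2)] by simp
  have "chebyshev_node k (real (k - 1)) < chebyshev_node k (real k - 3/2)"
    using k by (subst chebyshev_node_less_iff) (auto simp: of_nat_diff)
  moreover have "odd (k - 1)"
    using assms k by simp
  ultimately show "critval_F k (k - 1) < low_level k"
    using crit_F_window(2)[OF k(2)] by (simp add: low_level_def)
qed

lemma crit_F_above_low_level:
  assumes "j \<in> {1..<k - 1}"
  shows "chebyshev_node k (real k - 3/2) < crit_F k j" and "low_level k < critval_F k j"
proof -
  have j: "j \<in> {1..<k}"
    using assms by auto
  then have "real (k - 1) - 1/2 = real k - 3/2"
    by (simp add: of_nat_diff)
  then have "chebyshev_node k (real k - 3/2) \<le> chebyshev_node k (real j + 1/2)"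
    using chebyshev_node_half_le[of j "k - 1" k] assms by simp
  then show "chebyshev_node k (real k - 3/2) < crit_F k j"
    using crit_F_window(1)[OF j] by auto
  then show "low_level k < critval_F k j"
    using critval_F_bounds(1)[OF j] by (simp add: low_level_def)
qed

lemma curve_F_le_low_level:
  assumes "2 \<le> k" "poly (curve_F k) w \<le> low_level k"
  shows "w < chebyshev_node k (real k - 3/2)"
proof (rule ccontr)
  let ?e = "chebyshev_node k (real k - 3/2)"
  assume "\<not> w < ?e"
  moreover have "\<bar>?e\<bar> \<le> 1"
    by simp
  moreover have "real (k - 2) + 1/2 = real k - 3/2"
    using assms(1) by (simp add: of_nat_diff)
  then have "poly (curve_F k) ?e = ?e / 4"
    using poly_chebyshev_node_half_zero[of k "k - 2"] assms(1) by simp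
  ultimately show False
    using assms curve_F_ge_right[of k w] curve_F_on_unit[of w k]
    by (cases "w = ?e"; cases "1 \<le> w") (auto simp: low_level_def abs_le_iff)
qed

text \<open>The critical values of \<open>curve_G k\<close> are \<open>\<plusminus>2\<close> for odd \<open>k\<close> and \<open>low_level k\<close>,
  \<open>low_level k + 4\<close> for even \<open>k\<close>; none of them is a critical value of \<open>curve_F k\<close>.\<close>

definition curve_G :: "nat \<Rightarrow> real poly" where
  "curve_G k = (if odd k then smult 2 (chebyshev (4 * k))
                else [:low_level k + 2:] + smult (-2) (chebyshev (4 * k)))"

definition curve_G_level :: "nat \<Rightarrow> real \<Rightarrow> real" where
  "curve_G_level k v = (if odd k then v / 2 else (low_level k + 2 - v) / 2)"

definition curve_P :: "nat \<Rightarrow> real poly poly" where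
  "curve_P k = separated_poly (curve_F k) (curve_G k)"

lemma poly_curve_G_eq_iff: "poly (curve_G k) u = v \<longleftrightarrow> poly (chebyshev (4 * k)) u = curve_G_level k v"
  by (auto simp: curve_G_def curve_G_level_def)

lemma degree_curve_G:
  assumes "1 \<le> k"
  shows "degree (curve_G k) = 4 * k"
proof (cases "odd k")
  case False
  then have "curve_G k = [:low_level k + 2:] + smult (-2) (chebyshev (4 * k))"
    by (simp add: curve_G_def)
  also have "degree \<dots> = 4 * k"
    using assms by (subst degree_add_eq_right) (simp_all add: degree_chebyshev)
  finally show ?thesis .
qed (simp add: curve_G_def degree_chebyshev)

lemma pderiv_curve_G:
  "pderiv (curve_G k) = smult (if odd k then 2 else -2) (pderiv (chebyshev (4 * k)))"
  by (simp add: curve_G_def pderiv_smult pderiv_add pderiv_diff pderiv_minus pderiv_pCons)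

lemma abs_curve_G_level_critval_F_less_1:
  assumes "j \<in> {1..<k - 1}"
  shows "\<bar>curve_G_level k (critval_F k j)\<bar> < 1"
proof -
  have "j \<in> {1..<k}"
    using assms by auto
  then show ?thesis
    using critval_F_bounds(3)[of j k] crit_F_above_low_level(2)[OF assms] low_level_bounds[of k]
    by (auto simp: curve_G_level_def)
qed

lemma abs_curve_G_level_critval_F_neq_1:
  assumes "j \<in> {1..<k}"
  shows "\<bar>curve_G_level k (critval_F k j)\<bar> \<noteq> 1"
proof -
  consider "odd k" | "j \<in> {1..<k - 1}" | "even k" "j = k - 1"
    using assms by fastforce
  then show ?thesis
  proof cases
    case 1
    then show ?thesis
      using critval_F_bounds(3)[OF assms] by (auto simp: curve_G_level_def)
  next
    case 2
    then show ?thesis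
      using abs_curve_G_level_critval_F_less_1[of j k] by simp
  next
    case 3
    then show ?thesis
      using lowest_crit_F_below_low_level(2)[of k] critval_F_bounds(3)[OF assms]
        low_level_bounds[of k] assms
      by (auto simp: curve_G_level_def)
  qed
qed

lemma real_nonsingular_k_section_curve_P:
  assumes "1 \<le> k"
  shows "real_nonsingular_k_section k (curve_P k)"
  unfolding curve_P_def
proof (rule real_nonsingular_k_section_separated_poly)
  show "degree (curve_F k) = k" "degree (curve_G k) = 4 * k"
    using assms by (simp_all add: degree_curve_F degree_curve_G)
  have "coeff (curve_F k) 0 = poly (chebyshev k) 0" "coeff (curve_G k) 0 = poly (curve_G k) 0"
    by (simp_all flip: poly_0_coeff_0)
  moreover have "\<bar>poly (chebyshev k) 0\<bar> \<le> 1"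
    by (simp add: abs_poly_chebyshev_le_1)
  moreover have "poly (chebyshev (4 * k)) 0 = cos (2 * real k * pi)"
    using poly_chebyshev_cos[of "4 * k" "pi / 2"] by (simp add: mult_ac)
  then have "poly (chebyshev (4 * k)) 0 = 1"
    by simp
  moreover have "even k \<Longrightarrow> \<bar>poly (chebyshev k) 0\<bar> = 1"
    using poly_chebyshev_cos[of k "pi / 2"] by (auto elim!: evenE simp: mult.commute)
  ultimately show "coeff (curve_F k) 0 \<noteq> coeff (curve_G k) 0"
    using low_level_neq_minus_one[OF _ assms] low_level_bounds[of k]
    by (auto simp: curve_G_def abs_if split: if_splits)
next
  fix u w :: complex
  assume w: "poly (pderiv (map_poly of_real (curve_F k))) w = 0"
    and u: "poly (pderiv (map_poly of_real (curve_G k))) u = 0"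
  obtain j where j: "j \<in> {1..<k}" "w = of_real (crit_F k j)"
    using w complex_roots_pderiv_curve_F[OF assms] by blast
  have "poly (pderiv (map_poly of_real (chebyshev (4 * k)))) u = 0"
    using u by (simp add: pderiv_map_poly_of_real pderiv_curve_G map_poly_smult split: if_splits)
  then obtain y where y: "u = of_real y" "\<bar>poly (chebyshev (4 * k)) y\<bar> = 1"
    using chebyshev_crit_values[of "4 * k" u] assms by auto
  show "poly (map_poly of_real (curve_F k)) w \<noteq> poly (map_poly of_real (curve_G k)) u"
  proof
    assume "poly (map_poly of_real (curve_F k)) w = poly (map_poly of_real (curve_G k)) u"
    then have "critval_F k j = poly (curve_G k) y"
      using j(2) y(1) by (simp add: poly_map_poly_of_real critval_F_def del: poly_curve_F)
    then have "poly (chebyshev (4 * k)) y = curve_G_level k (critval_F k j)"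
      by (simp only: poly_curve_G_eq_iff[symmetric])
    then show False
      using y(2) abs_curve_G_level_critval_F_neq_1[OF j(1)] by simp
  qed
qed (use assms in simp)

lemma num_real_vertical_tangents_curve_P:
  assumes "1 \<le> k"
  shows "num_real_vertical_tangents (curve_P k) =
    card (\<Union>j\<in>{1..<k}. {u. poly (chebyshev (4 * k)) u = curve_G_level k (critval_F k j)})"
proof -
  have roots: "poly (pderiv (map_poly of_real (curve_F k))) w = 0 \<longleftrightarrow>
      w \<in> of_real ` crit_F k ` {1..<k}" for w :: complex
    using complex_roots_pderiv_curve_F[OF assms] by blast
  have "(\<exists>w. poly (pderiv (map_poly of_real (curve_F k))) w = 0 \<and>
          poly (map_poly of_real (curve_F k)) w = complex_of_real (poly (curve_G k) c)) \<longleftrightarrow>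
        (\<exists>j\<in>{1..<k}. poly (curve_G k) c = critval_F k j)" for c
    unfolding roots
    by (auto simp: poly_map_poly_of_real critval_F_def simp del: poly_curve_F)
      (metis atLeastLessThan_iff)
  then show ?thesis
    unfolding curve_P_def num_real_vertical_tangents_separated_poly
    by (simp add: poly_curve_G_eq_iff UNION_eq)
qed

lemma card_vertical_tangent_levels:
  assumes "1 \<le> k"
  defines "A \<equiv> \<lambda>j. {u. poly (chebyshev (4 * k)) u = curve_G_level k (critval_F k j)}"
  shows "(k - 2) * (4 * k) \<le> card (\<Union>j\<in>{1..<k}. A j)" "card (\<Union>j\<in>{1..<k}. A j) \<le> (k - 1) * (4 * k)"
proof -
  have fin: "finite (A j)" and le: "card (A j) \<le> 4 * k" for j
    using finite_chebyshev_level_and_card_le[of "4 * k"] assms by (simp_all add: A_def)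
  have "curve_G_level k v = curve_G_level k v' \<Longrightarrow> v = v'" for v v'
    by (auto simp: curve_G_level_def split: if_splits)
  then have disj: "A j \<inter> A j' = {}" if "j \<in> {1..<k}" "j' \<in> {1..<k}" "j \<noteq> j'" for j j'
    using inj_on_critval_F[of k] that by (auto simp: A_def inj_on_def)
  have card_UN: "card (\<Union>j\<in>J. A j) = (\<Sum>j\<in>J. card (A j))" if "J \<subseteq> {1..<k}" for J
  proof (rule card_UN_disjoint)
    show "finite J"
      using that finite_subset by blast
    show "\<forall>j\<in>J. finite (A j)"
      using fin by blast
    show "\<forall>i\<in>J. \<forall>j\<in>J. i \<noteq> j \<longrightarrow> A i \<inter> A j = {}"
      using that disj by blast
  qed
  have "(k - 2) * (4 * k) = (\<Sum>j\<in>{1..<k - 1}. card (A j))"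
    using assms card_chebyshev_level[of "4 * k"] abs_curve_G_level_critval_F_less_1[of _ k]
    by (simp add: A_def)
  also have "\<dots> = card (\<Union>j\<in>{1..<k - 1}. A j)"
    by (rule card_UN[symmetric]) auto
  also have "\<dots> \<le> card (\<Union>j\<in>{1..<k}. A j)"
    using fin by (intro card_mono UN_mono) auto
  finally show "(k - 2) * (4 * k) \<le> card (\<Union>j\<in>{1..<k}. A j)" .
  have "card (\<Union>j\<in>{1..<k}. A j) = (\<Sum>j\<in>{1..<k}. card (A j))"
    by (rule card_UN) simp
  also have "\<dots> \<le> (k - 1) * (4 * k)"
    using sum_bounded_above[of "{1..<k}" "\<lambda>j. card (A j)" "4 * k"] le by simp
  finally show "card (\<Union>j\<in>{1..<k}. A j) \<le> (k - 1) * (4 * k)" .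
qed

lemma num_real_vertical_tangents_curve_P_bound:
  assumes "1 \<le> k"
  shows "\<bar>real (num_real_vertical_tangents (curve_P k)) - 4 * (real k)\<^sup>2\<bar> \<le> 8 * real k"
proof -
  let ?r = "num_real_vertical_tangents (curve_P k)"
  have "(k - 2) * (4 * k) \<le> ?r" "?r \<le> (k - 1) * (4 * k)"
    using card_vertical_tangent_levels[OF assms] num_real_vertical_tangents_curve_P[OF assms]
    by simp_all
  then have "real ((k - 2) * (4 * k)) \<le> real ?r" "real ?r \<le> real ((k - 1) * (4 * k))"
    by linarith+
  moreover have "(real k - 2) * (4 * real k) \<le> real ((k - 2) * (4 * k))"
    by (simp add: mult_right_mono)
  moreover have "real ((k - 1) * (4 * k)) = (real k - 1) * (4 * real k)"
    using assms by (simp add: of_nat_diff)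
  ultimately have "(real k - 2) * (4 * real k) \<le> real ?r" "real ?r \<le> (real k - 1) * (4 * real k)"
    by linarith+
  then show ?thesis
    using assms by (simp add: abs_le_iff power2_eq_square algebra_simps)
qed

lemma real_part_curve_P:
  "real_part (curve_P k) =
    {(u, w). poly (chebyshev (4 * k)) u = curve_G_level k (poly (curve_F k) w)}"
  unfolding curve_P_def real_part_separated_poly
  by (auto simp: poly_curve_G_eq_iff[symmetric] simp del: poly_curve_F)

lemma connected_real_part_curve_P_odd:
  assumes "1 \<le> k" "odd k"
  shows "connected (real_part (curve_P k))"
proof -
  let ?F = "poly (curve_F k)"
  have s: "curve_G_level k = (\<lambda>v. v / 2)"
    using assms(2) by (simp add: curve_G_level_def fun_eq_iff)
  have crit: "\<bar>?F z\<bar> \<le> 5/4" "\<bar>z\<bar> \<le> 1" if "poly (pderiv (curve_F k)) z = 0" for z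
    using that critval_F_bounds(3) abs_crit_F_le_1 pderiv_curve_F_eq_0_iff[OF assms(1)]
    by (auto simp: critval_F_def simp del: poly_curve_F)
  have "-2 \<le> ?F z \<and> ?F z \<le> 2" if "poly (pderiv (curve_F k)) z = 0" for z
    using crit(1)[OF that] abs_le_D1[of "?F z"] abs_le_D2[of "?F z"] by linarith
  then have "connected {w \<in> UNIV. -2 \<le> ?F w \<and> ?F w \<le> 2}"
    by (intro connected_poly_band) auto
  moreover have "{w. \<bar>?F w / 2\<bar> \<le> 1} = {w \<in> UNIV. -2 \<le> ?F w \<and> ?F w \<le> 2}"
    by auto
  moreover have "is_interval {w \<in> {1<..}. 2 \<le> ?F w}"
    by (intro is_interval_poly_superlevel) (auto simp: is_interval_1 abs_le_iff dest!: crit(2))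
  moreover have "{w. 1 \<le> ?F w / 2} = {w \<in> {1<..}. 2 \<le> ?F w}"
  proof -
    have "?F w < 2" if "w \<le> 1" for w
      using that curve_F_on_unit[of w k] curve_F_le_left_odd[OF assms, of w]
      by (cases "w \<le> -1") (auto simp: abs_le_iff)
    then show ?thesis
      by (auto simp del: poly_curve_F) (meson not_le)
  qed
  moreover obtain a where "?F a = 2"
    using IVT'[of ?F 1 2 3] curve_F_on_unit[of 1 k] curve_F_ge_right[OF assms(1), of 3]
    by (force intro: continuous_intros)
  moreover obtain b where "?F b = -2"
    using IVT'[of ?F "-3" "-2" "-1"] curve_F_on_unit[of "-1" k]
      curve_F_le_left_odd[OF assms, of "-3"]
    by (force intro: continuous_intros)
  moreover have "continuous_on UNIV (\<lambda>w. ?F w / 2)"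
    by (intro continuous_intros) simp
  ultimately show ?thesis
    unfolding real_part_curve_P s using assms(1)
    by (intro connected_chebyshev_graph[where L = "{w. \<bar>?F w / 2\<bar> \<le> 1}" and p = a and p' = b
          and R = "{w. \<bar>?F w / 2\<bar> \<le> 1}" and q = a and q' = b])
      (auto simp: is_interval_connected_1 simp del: poly_curve_F)
qed

lemma crit_F_cases:
  assumes "1 \<le> k" "poly (pderiv (curve_F k)) z = 0"
  shows "z = crit_F k (k - 1) \<or>
    chebyshev_node k (real k - 3/2) < z \<and>
    low_level k < poly (curve_F k) z \<and> poly (curve_F k) z \<le> 5/4"
proof -
  obtain j where j: "j \<in> {1..<k}" "z = crit_F k j"
    using assms pderiv_curve_F_eq_0_iff by blast
  show ?thesis
  proof (cases "j = k - 1")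
    case False
    then have "j \<in> {1..<k - 1}"
      using j(1) by auto
    then show ?thesis
      using crit_F_above_low_level critval_F_bounds(3)[OF j(1)] j(2)
      by (auto simp: critval_F_def abs_le_iff simp del: poly_curve_F)
  qed (use j in simp)
qed

lemma connected_real_part_curve_P_even:
  assumes "1 \<le> k" "even k"
  shows "connected (real_part (curve_P k))"
proof -
  let ?F = "poly (curve_F k)" and ?\<beta> = "low_level k" and ?z = "crit_F k (k - 1)"
    and ?e = "chebyshev_node k (real k - 3/2)"
  have "2 \<le> k"
    using assms by presburger
  then have k: "2 \<le> k" "k - 1 \<in> {1..<k}"
    by auto
  have s: "curve_G_level k = (\<lambda>v. (?\<beta> + 2 - v) / 2)"
    using assms(2) by (simp add: curve_G_level_def fun_eq_iff)
  have \<beta>: "-5/4 \<le> ?\<beta>" "?\<beta> \<le> -3/4"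
    by (rule low_level_bounds)+
  have z: "?F ?z < ?\<beta>" "?z < ?e" "\<bar>?z\<bar> \<le> 1"
    using lowest_crit_F_below_low_level[OF assms(2,1)] abs_crit_F_le_1[OF k(2)]
    by (simp_all add: critval_F_def del: poly_curve_F)
  define L where "L = {w \<in> {..?z}. ?\<beta> \<le> ?F w \<and> ?F w \<le> ?\<beta> + 4}"
  define R where "R = {w \<in> {?z..}. ?\<beta> \<le> ?F w \<and> ?F w \<le> ?\<beta> + 4}"
  have band: "?\<beta> \<le> ?F c \<and> ?F c \<le> ?\<beta> + 4" if "poly (pderiv (curve_F k)) c = 0" "c \<noteq> ?z" for c
    using crit_F_cases[OF assms(1) that(1)] that(2) \<beta> by auto
  have "connected L" "connected R"
    unfolding L_def R_def using band
    by (intro connected_poly_band; force simp: is_interval_1)+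
  moreover have "{w. \<bar>(?\<beta> + 2 - ?F w) / 2\<bar> \<le> 1} = L \<union> R"
    by (auto simp: L_def R_def abs_le_iff simp del: poly_curve_F)
  moreover have "is_interval {w \<in> {..<?e}. ?F w \<le> ?\<beta>}"
    using crit_F_cases[OF assms(1)] z(1)
    by (intro is_interval_poly_sublevel) (force simp: is_interval_1)+
  moreover have "{w. 1 \<le> (?\<beta> + 2 - ?F w) / 2} = {w \<in> {..<?e}. ?F w \<le> ?\<beta>}"
    using curve_F_le_low_level[OF k(1)] by (auto simp del: poly_curve_F)
  moreover have F5: "?\<beta> + 4 \<le> ?F (-5)" "?\<beta> + 4 \<le> ?F 5"
    using curve_F_ge_left_even[OF assms(1,2), of "-5"] curve_F_ge_right[OF assms(1), of 5] \<beta>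
    by simp_all
  have cont: "continuous_on A ?F" for A
    by (intro continuous_intros)
  have left: "\<exists>x. -5 \<le> x \<and> x \<le> ?z \<and> ?F x = y" if "?\<beta> \<le> y" "y \<le> ?\<beta> + 4" for y
    using IVT2'[of ?F ?z y "-5"] that z F5 cont by auto
  have right: "\<exists>x. ?z \<le> x \<and> x \<le> 5 \<and> ?F x = y" if "?\<beta> \<le> y" "y \<le> ?\<beta> + 4" for y
    using IVT'[of ?F ?z y 5] that z F5 cont by auto
  obtain p p' q q' where "p \<in> L" "?F p = ?\<beta>" "p' \<in> L" "?F p' = ?\<beta> + 4"
    "q \<in> R" "?F q = ?\<beta>" "q' \<in> R" "?F q' = ?\<beta> + 4"
    using left[of ?\<beta>] left[of "?\<beta> + 4"] right[of ?\<beta>] right[of "?\<beta> + 4"]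
    by (auto simp: L_def R_def simp del: poly_curve_F)
  moreover have "continuous_on UNIV (\<lambda>w. (?\<beta> + 2 - ?F w) / 2)"
    by (intro continuous_intros) simp
  ultimately show ?thesis
    unfolding real_part_curve_P s using assms
    by (intro connected_chebyshev_graph[where L = L and R = R and p = p and p' = p' and q = q
          and q' = q']) (auto simp: is_interval_connected_1 simp del: poly_curve_F)
qed

lemma connected_real_part_curve_P: "1 \<le> k \<Longrightarrow> connected (real_part (curve_P k))"
  using connected_real_part_curve_P_odd connected_real_part_curve_P_even by blast

theorem proposition4p7:
  shows "\<exists>C :: nat \<Rightarrow> real poly poly.
     (\<forall>k\<ge>1. real_nonsingular_k_section k (C k) \<and> connected (closure_real_part_RO4 (C k))) \<and>
     (\<exists>M :: real. \<forall>k\<ge>1.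
        \<bar>real (num_real_vertical_tangents (C k)) - 4 * (real k)^2\<bar> \<le> M * real k)"
proof (intro exI[of _ curve_P] conjI exI[of _ 8] allI impI)
  fix k :: nat
  assume "1 \<le> k"
  then show "real_nonsingular_k_section k (curve_P k)"
    and "connected (closure_real_part_RO4 (curve_P k))"
    and "\<bar>real (num_real_vertical_tangents (curve_P k)) - 4 * (real k)^2\<bar> \<le> 8 * real k"
    by (simp_all add: real_nonsingular_k_section_curve_P connected_closure_real_part_RO4
        connected_real_part_curve_P num_real_vertical_tangents_curve_P_bound)
qed

end
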